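(* Let $\lambda\in\mathbb{C}^*$, $\alpha\in\mathbb{C}$, $t\in\{1,-1\}$, and let $\mathcal{M}_t(\lambda,\alpha)$ be the $\mathcal{T}$-module described in the context. Let $\Upsilon_t=\partial^2\mathbb{C}[\partial^2]\oplus\partial\mathbb{C}[\partial^2]\subseteq\mathcal{M}_t(\lambda,0)$. Then: (1) $\mathcal{M}_t(\lambda,\alpha)$ is simple if and only if $\alpha\neq0$. Furthermore, $\Upsilon_t$ is the unique nonzero proper submodule of $\mathcal{M}_t(\lambda,0)$, and $\mathcal{M}_t(\lambda,0)/\Upsilon_t$ is a one-dimensional trivial $\mathcal{T}$-module. (2) $\Upsilon_1\cong\Pi(\mathcal{M}_{-1}(\lambda,\frac12))$ and $\Upsilon_{-1}\cong\Pi(\mathcal{M}_1(\lambda,\frac12))$, and these are simple $\mathcal{T}$-modules.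
   Context: The twisted $N=2$ superconformal algebra $\mathcal{T}$ is the Lie superalgebra over $\mathbb{C}$ with basis $\{L_m, I_r, G_p\mid m\in\mathbb{Z}, r\in\frac12+\mathbb{Z}, p\in\frac12\mathbb{Z}\}$, even part spanned by the $L_m,I_r$, odd part spanned by the $G_p$, and with the only nonzero brackets $[L_m,L_n]=(m-n)L_{m+n}$, $[L_m,I_r]=-rI_{m+r}$, $[L_m,G_p]=(\frac m2-p)G_{m+p}$, $[I_r,G_p]=G_{r+p}$, and $[G_p,G_q]=(-1)^{2p}2L_{p+q}$ if $p+q\in\mathbb{Z}$, $[G_p,G_q]=(-1)^{2p+1}(p-q)I_{p+q}$ if $p+q\in\frac12+\mathbb{Z}$. Modules are $\mathbb{Z}_2$-graded (super)modules; $\Pi$ denotes the parity-change functor (swapping even and odd parts). For $\lambda\in\mathbb{C}^*,\alpha\in\mathbb{C},t=\pm1$, $\mathcal{M}_t(\lambda,\alpha)$ is the space $\mathbb{C}[\partial^2]\oplus\partial\mathbb{C}[\partial^2]$ ($\partial$ a formal variable) with even part $\mathbb{C}[\partial^2]$, odd part $\partial\mathbb{C}[\partial^2]$, and action ($m\in\mathbb{Z}$, $r\in\frac12+\mathbb{Z}$, $p\in\frac12\mathbb{Z}$): $L_mf(\partial^2)=\lambda^m(\partial^2+m\alpha)f(\partial^2+m)$, $L_m\partial f(\partial^2)=\lambda^m(\partial^2+m(\alpha+\frac12))\partial f(\partial^2+m)$, $I_rf(\partial^2)=-2t^{2r}\lambda^{r}\alpha f(\partial^2+r)$, $I_r\partial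 f(\partial^2)=t^{2r}\lambda^{r}(1-2\alpha)\partial f(\partial^2+r)$, $G_pf(\partial^2)=t^{2p}\lambda^p\partial f(\partial^2+p)$, $G_p\partial f(\partial^2)=(-t)^{2p}\lambda^p(\partial^2+2p\alpha)f(\partial^2+p)$. For $p\in\frac12\mathbb{Z}$, $\lambda^p$ means $(\lambda^{1/2})^{2p}$ for a fixed square root $\lambda^{1/2}$. *)

theory Defs
  imports Complex_Main "HOL-Computational_Algebra.Polynomial"
begin

text \<open>Basis elements of the twisted N=2 superconformal algebra T.
  L m  stands for L_m        (m an integer),
  I k  stands for I_{k+1/2}  (k an integer; so r = k + 1/2 ranges over 1/2 + Z),
  G n  stands for G_{n/2}    (n an integer; so p = n/2 ranges over (1/2)Z).\<close>
datatype gen = L int | I int | G int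

text \<open>Vectors of M_t(lambda,alpha) = C[d^2] + d C[d^2]: a pair (f,g) of polynomials in
  x = d^2 represents f(d^2) + d g(d^2); the even part is {(f,0)}, the odd part {(0,g)}.\<close>
type_synonym vec = "complex poly \<times> complex poly"

definition vadd :: "vec \<Rightarrow> vec \<Rightarrow> vec" where
  "vadd v w = (fst v + fst w, snd v + snd w)"

definition vsmult :: "complex \<Rightarrow> vec \<Rightarrow> vec" where
  "vsmult c v = (smult c (fst v), smult c (snd v))"

definition vzero :: vec where "vzero = (0, 0)"

definition shift :: "complex \<Rightarrow> complex poly \<Rightarrow> complex poly" where
  "shift c f = pcompose f [:c, 1:]"

text \<open>The action of the basis elements on M_t(lambda, alpha), where lambda = mu^2 and mu is the
  fixed square root lambda^{1/2}; lambda^p = mu^(2p) for p in (1/2)Z.\<close>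
fun Mact :: "complex \<Rightarrow> complex \<Rightarrow> complex \<Rightarrow> gen \<Rightarrow> vec \<Rightarrow> vec" where
  "Mact t \<mu> \<alpha> (L m) (f, g) =
     (smult (\<mu> powi (2 * m)) ([:of_int m * \<alpha>, 1:] * shift (of_int m) f),
      smult (\<mu> powi (2 * m)) ([:of_int m * (\<alpha> + 1/2), 1:] * shift (of_int m) g))"
| "Mact t \<mu> \<alpha> (I k) (f, g) =
     (smult (- 2 * t powi (2 * k + 1) * \<mu> powi (2 * k + 1) * \<alpha>) (shift (of_int k + 1/2) f),
      smult (t powi (2 * k + 1) * \<mu> powi (2 * k + 1) * (1 - 2 * \<alpha>)) (shift (of_int k + 1/2) g))"
| "Mact t \<mu> \<alpha> (G n) (f, g) =
     (smult ((- t) powi n * \<mu> powi n) ([:of_int n * \<alpha>, 1:] * shift (of_int n / 2) g),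
      smult (t powi n * \<mu> powi n) (shift (of_int n / 2) f))"

definition is_submod :: "(gen \<Rightarrow> vec \<Rightarrow> vec) \<Rightarrow> vec set \<Rightarrow> bool" where
  "is_submod act W \<longleftrightarrow>
     vzero \<in> W \<and>
     (\<forall>v\<in>W. \<forall>w\<in>W. vadd v w \<in> W) \<and>
     (\<forall>c. \<forall>v\<in>W. vsmult c v \<in> W) \<and>
     (\<forall>v\<in>W. (fst v, 0) \<in> W \<and> (0, snd v) \<in> W) \<and>
     (\<forall>X. \<forall>v\<in>W. act X v \<in> W)"

definition simple_on :: "(gen \<Rightarrow> vec \<Rightarrow> vec) \<Rightarrow> vec set \<Rightarrow> bool" where
  "simple_on act V \<longleftrightarrow> is_submod act V \<and> V \<noteq> {vzero} \<and>
     (\<forall>W. W \<subseteq> V \<and> is_submod act W \<longrightarrow> W = {vzero} \<or> W = V)"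

definition simple_mod :: "(gen \<Rightarrow> vec \<Rightarrow> vec) \<Rightarrow> bool" where
  "simple_mod act \<longleftrightarrow> simple_on act UNIV"

text \<open>Upsilon = d^2 C[d^2] + d C[d^2] (inside M_t(lambda,0)).\<close>
definition Ups :: "vec set" where
  "Ups = {(f, g). [:0, 1:] dvd f}"

definition iso_to_Pi :: "(gen \<Rightarrow> vec \<Rightarrow> vec) \<Rightarrow> vec set \<Rightarrow> (gen \<Rightarrow> vec \<Rightarrow> vec) \<Rightarrow> (vec \<Rightarrow> vec) \<Rightarrow> bool" where
  "iso_to_Pi act1 V act2 \<phi> \<longleftrightarrow>
     bij_betw \<phi> V UNIV \<and>
     (\<forall>v\<in>V. \<forall>w\<in>V. \<phi> (vadd v w) = vadd (\<phi> v) (\<phi> w)) \<and>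
     (\<forall>c. \<forall>v\<in>V. \<phi> (vsmult c v) = vsmult c (\<phi> v)) \<and>
     (\<forall>f. (f, 0) \<in> V \<longrightarrow> fst (\<phi> (f, 0)) = 0) \<and>
     (\<forall>g. (0, g) \<in> V \<longrightarrow> snd (\<phi> (0, g)) = 0) \<and>
     (\<forall>X. \<forall>v\<in>V. \<phi> (act1 X v) = act2 X (\<phi> v))"

end

theory Submission
  imports Defs
begin

text \<open>A submodule is determined by its even and odd parts, which are subspaces of
  \<open>\<complex>[x]\<close>, \<open>x = \<partial>\<^sup>2\<close>. Both are closed under multiplication by \<open>x\<close> (via \<open>L\<^sub>0\<close>), hence
  ideals, and \<open>I\<^sub>0\<close> acts on them by a scalar times the shift \<open>x \<mapsto> x + 1/2\<close>; the
  scalar is \<open>-2t\<mu>\<alpha>\<close> on the even part and \<open>t\<mu>(1 - 2\<alpha>)\<close> on the odd part.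
  A nonzero ideal stable under a nontrivial shift is everything, since \<open>f(x + c) - f(x)\<close>
  has lower degree than \<open>f\<close>. Finally \<open>G\<^sub>0\<close> maps the even part into the odd part and
  \<open>x\<close> times the odd part into the even part. So for \<open>\<alpha> \<noteq> 0\<close> any nonzero submodule
  has full even part and hence is everything, while for \<open>\<alpha> = 0\<close> it has full odd part
  and hence contains \<open>\<Upsilon>\<close>, which has codimension one. Division by \<open>\<partial>\<close> maps
  \<open>\<Upsilon> \<subseteq> M\<^sub>t(\<lambda>, 0)\<close> isomorphically onto \<open>\<Pi>(M\<^sub>-\<^sub>t(\<lambda>, 1/2))\<close>.\<close>

lemma shift_0[simp]: "shift c 0 = 0"
  by (simp add: shift_def)

lemma shift_zero[simp]: "shift 0 f = f"
  by (simp add: shift_def)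

lemma shift_mult: "shift c (p * q) = shift c p * shift c q"
  by (simp add: shift_def pcompose_mult)

lemma shift_x[simp]: "shift c [:0, 1:] = [:c, 1:]"
  by (simp add: shift_def pcompose_pCons)

lemma poly_shift: "poly (shift c f) x = poly f (x + c)"
  by (simp add: shift_def poly_pcompose add.commute)

lemma degree_shift[simp]: "degree (shift c f) = degree f"
  by (simp add: shift_def degree_pcompose)

lemma lead_coeff_shift[simp]: "lead_coeff (shift c f) = lead_coeff f"
  by (simp add: shift_def lead_coeff_comp)

text \<open>A fixed point of a nonzero shift takes the value \<open>f(0)\<close> at all of \<open>\<nat>c\<close>.\<close>
lemma shift_neq_self:
  assumes "c \<noteq> 0" "degree f > 0"
  shows "shift c f \<noteq> f"
proof
  assume fixed: "shift c f = f"
  have "poly f (of_nat n * c) = poly f 0" for n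
  proof (induction n)
    case (Suc n)
    have "poly f (of_nat (Suc n) * c) = poly (shift c f) (of_nat n * c)"
      by (simp add: poly_shift algebra_simps)
    with Suc fixed show ?case by simp
  qed simp
  then have "range (\<lambda>n::nat. of_nat n * c) \<subseteq> {x. poly (f - [:poly f 0:]) x = 0}"
    by auto
  moreover have "infinite (range (\<lambda>n::nat. of_nat n * c))"
    using assms(1) by (intro range_inj_infinite) (auto simp: inj_def)
  ultimately have "f - [:poly f 0:] = 0"
    using poly_roots_finite finite_subset by blast
  then have "degree f = 0"
    by (metis degree_pCons_0 eq_iff_diff_eq_0)
  with assms(2) show False by simp
qed

lemma degree_shift_minus_less:
  assumes "degree f > 0"
  shows "degree (shift c f - f) < degree f"
proof (cases "shift c f - f = 0")
  case False
  have "degree (shift c f - f) \<le> degree f"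
    using degree_diff_le[of "shift c f" "degree f" f] by simp
  moreover have "coeff (shift c f - f) (degree f) = 0"
    using lead_coeff_shift[of c f] by simp
  ultimately show ?thesis
    using False leading_coeff_0_iff le_neq_implies_less by metis
qed (use assms in simp)

definition shift_invariant_ideal :: "complex \<Rightarrow> complex poly set \<Rightarrow> bool" where
  "shift_invariant_ideal c S \<longleftrightarrow>
     (\<forall>a\<in>S. \<forall>b\<in>S. a + b \<in> S) \<and> (\<forall>d. \<forall>a\<in>S. smult d a \<in> S) \<and>
     (\<forall>a\<in>S. [:0, 1:] * a \<in> S) \<and> (\<forall>a\<in>S. shift c a \<in> S)"

lemma shift_invariant_ideal_has_constant:
  assumes S: "shift_invariant_ideal c S" and "c \<noteq> 0" "f \<in> S" "f \<noteq> 0"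
  shows "\<exists>d. d \<noteq> 0 \<and> [:d:] \<in> S"
  using assms(3,4)
proof (induction "degree f" arbitrary: f rule: less_induct)
  case less
  show ?case
  proof (cases "degree f = 0")
    case True
    with less.prems show ?thesis by (metis degree_eq_zeroE pCons_0_0)
  next
    case False
    have "shift c f + smult (-1) f \<in> S"
      using S less.prems(1) unfolding shift_invariant_ideal_def by blast
    moreover have "shift c f - f \<noteq> 0"
      using shift_neq_self[OF \<open>c \<noteq> 0\<close>] False by simp
    moreover have "degree (shift c f - f) < degree f"
      using degree_shift_minus_less False by simp
    ultimately show ?thesis using less.hyps by simp
  qed
qed

lemma shift_invariant_ideal_eq_UNIV:
  assumes S: "shift_invariant_ideal c S" and "c \<noteq> 0" "f \<in> S" "f \<noteq> 0"
  shows "S = UNIV"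
proof -
  obtain d where "d \<noteq> 0" "[:d:] \<in> S"
    using shift_invariant_ideal_has_constant[OF assms] by blast
  moreover have "smult (1 / d) [:d:] = 1"
    using \<open>d \<noteq> 0\<close> by (simp add: one_pCons)
  ultimately have one: "1 \<in> S"
    using S unfolding shift_invariant_ideal_def by metis
  have "p \<in> S" for p
  proof (induction p)
    case 0
    show ?case using S one unfolding shift_invariant_ideal_def by (metis smult_0_left)
  next
    case (pCons a p)
    have "pCons a p = smult a 1 + [:0, 1:] * p"
      by (simp add: one_pCons)
    with S one pCons show ?case
      unfolding shift_invariant_ideal_def by metis
  qed
  then show ?thesis by blast
qed

lemma vadd_Pair[simp]: "vadd (a, b) (c, d) = (a + c, b + d)"
  by (simp add: vadd_def)

lemma vsmult_Pair[simp]: "vsmult c (a, b) = (smult c a, smult c b)"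
  by (simp add: vsmult_def)

lemma Mact_L0[simp]: "Mact t \<mu> \<alpha> (L 0) (f, g) = ([:0, 1:] * f, [:0, 1:] * g)"
  by simp

lemma Mact_G0[simp]: "Mact t \<mu> \<alpha> (G 0) (f, g) = ([:0, 1:] * g, f)"
  by simp

lemma Mact_I0[simp]: "Mact t \<mu> \<alpha> (I 0) (f, g) =
    (smult (- 2 * t * \<mu> * \<alpha>) (shift (1/2) f), smult (t * \<mu> * (1 - 2 * \<alpha>)) (shift (1/2) g))"
  by simp

definition even_part :: "vec set \<Rightarrow> complex poly set" where
  "even_part W = {f. (f, 0) \<in> W}"

definition odd_part :: "vec set \<Rightarrow> complex poly set" where
  "odd_part W = {g. (0, g) \<in> W}"

lemma is_submodD:
  assumes "is_submod act W"
  shows "vzero \<in> W" "v \<in> W \<Longrightarrow> w \<in> W \<Longrightarrow> vadd v w \<in> W"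
    "v \<in> W \<Longrightarrow> vsmult c v \<in> W" "(f, g) \<in> W \<Longrightarrow> (f, 0) \<in> W"
    "(f, g) \<in> W \<Longrightarrow> (0, g) \<in> W" "v \<in> W \<Longrightarrow> act X v \<in> W"
  using assms unfolding is_submod_def by fastforce+

lemma is_submod_mem_iff:
  assumes "is_submod act W"
  shows "(f, g) \<in> W \<longleftrightarrow> f \<in> even_part W \<and> g \<in> odd_part W"
  using is_submodD[OF assms] is_submodD(2)[OF assms, of "(f, 0)" "(0, g)"]
  by (auto simp: even_part_def odd_part_def)

lemma even_part_shift_invariant_ideal:
  assumes W: "is_submod (Mact t \<mu> \<alpha>) W" and "t * \<mu> * \<alpha> \<noteq> 0"
  shows "shift_invariant_ideal (1/2) (even_part W)"
  unfolding shift_invariant_ideal_def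
proof (intro conjI ballI allI)
  fix a b assume a: "a \<in> even_part W" and b: "b \<in> even_part W"
  show "a + b \<in> even_part W"
    using is_submodD(2)[OF W, of "(a, 0)" "(b, 0)"] a b by (simp add: even_part_def)
  show "[:0, 1:] * a \<in> even_part W"
    using is_submodD(6)[OF W, of "(a, 0)" "L 0"] a by (simp add: even_part_def)
  show "smult d a \<in> even_part W" for d
    using is_submodD(3)[OF W, of "(a, 0)" d] a by (simp add: even_part_def)
  let ?k = "- 2 * t * \<mu> * \<alpha>"
  have "vsmult (1 / ?k) (Mact t \<mu> \<alpha> (I 0) (a, 0)) \<in> W"
    using is_submodD(3)[OF W, of _ "1 / ?k", OF is_submodD(6)[OF W, of "(a, 0)" "I 0"]] a
    by (simp add: even_part_def)
  then show "shift (1/2) a \<in> even_part W"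
    using assms(2) by (simp add: even_part_def)
qed

lemma odd_part_shift_invariant_ideal:
  assumes W: "is_submod (Mact t \<mu> \<alpha>) W" and "t * \<mu> * (1 - 2 * \<alpha>) \<noteq> 0"
  shows "shift_invariant_ideal (1/2) (odd_part W)"
  unfolding shift_invariant_ideal_def
proof (intro conjI ballI allI)
  fix a b assume a: "a \<in> odd_part W" and b: "b \<in> odd_part W"
  show "a + b \<in> odd_part W"
    using is_submodD(2)[OF W, of "(0, a)" "(0, b)"] a b by (simp add: odd_part_def)
  show "[:0, 1:] * a \<in> odd_part W"
    using is_submodD(6)[OF W, of "(0, a)" "L 0"] a by (simp add: odd_part_def)
  show "smult d a \<in> odd_part W" for d
    using is_submodD(3)[OF W, of "(0, a)" d] a by (simp add: odd_part_def)
  let ?k = "t * \<mu> * (1 - 2 * \<alpha>)"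
  have "vsmult (1 / ?k) (Mact t \<mu> \<alpha> (I 0) (0, a)) \<in> W"
    using is_submodD(3)[OF W, of _ "1 / ?k", OF is_submodD(6)[OF W, of "(0, a)" "I 0"]] a
    by (simp add: odd_part_def)
  then show "shift (1/2) a \<in> odd_part W"
    using assms(2) by (simp add: odd_part_def)
qed

lemma even_part_subset_odd_part:
  assumes "is_submod (Mact t \<mu> \<alpha>) W"
  shows "even_part W \<subseteq> odd_part W"
  using is_submodD(6)[OF assms, of _ "G 0"] by (force simp: even_part_def odd_part_def)

lemma x_mult_odd_part:
  assumes "is_submod (Mact t \<mu> \<alpha>) W" "g \<in> odd_part W"
  shows "[:0, 1:] * g \<in> even_part W"
  using is_submodD(6)[OF assms(1), of "(0, g)" "G 0"] assms(2)
  by (simp add: even_part_def odd_part_def)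

lemma even_part_nonzero:
  assumes W: "is_submod (Mact t \<mu> \<alpha>) W" and "W \<noteq> {vzero}"
  obtains f where "f \<in> even_part W" "f \<noteq> 0"
proof -
  obtain f g where fg: "(f, g) \<in> W" "(f, g) \<noteq> vzero"
    using assms is_submodD(1)[OF W] by fastforce
  show ?thesis
  proof (cases "f = 0")
    case True
    then show ?thesis
      using that x_mult_odd_part[OF W, of g] fg is_submod_mem_iff[OF W]
      by (auto simp: vzero_def)
  qed (use that fg is_submod_mem_iff[OF W] in blast)
qed

lemma submod_eq_UNIV_if_even_part_eq_UNIV:
  assumes "is_submod (Mact t \<mu> \<alpha>) W" "even_part W = UNIV"
  shows "W = UNIV"
  using assms even_part_subset_odd_part[OF assms(1)] is_submod_mem_iff[OF assms(1)] by auto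

lemma simple_mod_Mact:
  assumes "t \<noteq> 0" "\<mu> \<noteq> 0" "\<alpha> \<noteq> 0"
  shows "simple_mod (Mact t \<mu> \<alpha>)"
  unfolding simple_mod_def simple_on_def
proof (intro conjI allI impI)
  show "is_submod (Mact t \<mu> \<alpha>) UNIV"
    by (simp add: is_submod_def)
  show "UNIV \<noteq> {vzero}"
    by (metis UNIV_I singletonD vzero_def one_neq_zero fst_conv)
  fix W assume "W \<subseteq> UNIV \<and> is_submod (Mact t \<mu> \<alpha>) W"
  then have W: "is_submod (Mact t \<mu> \<alpha>) W" by blast
  show "W = {vzero} \<or> W = UNIV"
  proof (cases "W = {vzero}")
    case False
    then obtain f where "f \<in> even_part W" "f \<noteq> 0"
      using even_part_nonzero[OF W] by blast
    then have "even_part W = UNIV"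
      using shift_invariant_ideal_eq_UNIV[OF even_part_shift_invariant_ideal[OF W]] assms
      by simp
    then show ?thesis
      using submod_eq_UNIV_if_even_part_eq_UNIV[OF W] by blast
  qed simp
qed

lemma Ups_iff: "(f, g) \<in> Ups \<longleftrightarrow> coeff f 0 = 0"
proof -
  have "[:0, 1:] dvd f \<longleftrightarrow> poly f 0 = 0"
    using poly_eq_0_iff_dvd[of f 0] by simp
  then show ?thesis
    by (simp add: Ups_def poly_0_coeff_0)
qed

lemma Mact0_in_Ups: "Mact t \<mu> 0 X w \<in> Ups"
  by (cases X; cases w) (simp_all add: Ups_iff)

lemma Ups_submod: "is_submod (Mact t \<mu> 0) Ups"
  unfolding is_submod_def by (auto simp: Mact0_in_Ups vzero_def vadd_def vsmult_def Ups_iff)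

lemma Ups_neq_zero: "Ups \<noteq> {vzero}"
proof -
  have "(0, 1) \<in> Ups" "(0, 1) \<noteq> vzero"
    by (auto simp: Ups_def vzero_def)
  then show ?thesis by blast
qed

lemma Ups_neq_UNIV: "Ups \<noteq> UNIV"
  using Ups_iff[of 1 0] by auto

lemma Ups_complement: "vadd w (vsmult (- coeff (fst w) 0) (1, 0)) \<in> Ups"
  by (cases w) (simp add: Ups_iff)

lemma Ups_subset_submod:
  assumes "t \<noteq> 0" "\<mu> \<noteq> 0" and W: "is_submod (Mact t \<mu> 0) W" and "W \<noteq> {vzero}"
  shows "Ups \<subseteq> W"
proof -
  obtain f where "f \<in> even_part W" "f \<noteq> 0"
    using even_part_nonzero[OF W] assms(4) by blast
  then have "odd_part W = UNIV"
    using shift_invariant_ideal_eq_UNIV[OF odd_part_shift_invariant_ideal[OF W]]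
      even_part_subset_odd_part[OF W] assms(1,2) by auto
  then show ?thesis
    using x_mult_odd_part[OF W] is_submod_mem_iff[OF W] by (auto simp: Ups_def)
qed

lemma submod_eq_Ups:
  assumes "t \<noteq> 0" "\<mu> \<noteq> 0" and W: "is_submod (Mact t \<mu> 0) W"
    and "W \<noteq> {vzero}" "W \<noteq> UNIV"
  shows "W = Ups"
proof (rule ccontr)
  assume "W \<noteq> Ups"
  moreover have sub: "Ups \<subseteq> W"
    using Ups_subset_submod[OF assms(1-4)] .
  ultimately obtain v where v: "v \<in> W" "v \<notin> Ups" by blast
  define c where "c = coeff (fst v) 0"
  have "c \<noteq> 0"
    using v(2) Ups_iff[of "fst v" "snd v"] by (simp add: c_def)
  have "vadd v (vsmult (- 1) (vadd v (vsmult (- c) (1, 0)))) \<in> W"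
    using Ups_complement[of v] sub v(1) is_submodD(2,3)[OF W] unfolding c_def by blast
  then have "([:c:], 0) \<in> W"
    by (cases v) simp
  then have "vsmult (1 / c) ([:c:], 0) \<in> W"
    using is_submodD(3)[OF W] by blast
  then have one: "(1, 0) \<in> W"
    using \<open>c \<noteq> 0\<close> by (simp add: one_pCons)
  have "w \<in> W" for w
  proof -
    have "vadd (vadd w (vsmult (- coeff (fst w) 0) (1, 0))) (vsmult (coeff (fst w) 0) (1, 0)) \<in> W"
      using Ups_complement[of w] sub one is_submodD(2,3)[OF W] by blast
    then show ?thesis by (cases w) (simp add: add.assoc)
  qed
  with assms(5) show False by blast
qed

lemma simple_on_Ups:
  assumes "t \<noteq> 0" "\<mu> \<noteq> 0"
  shows "simple_on (Mact t \<mu> 0) Ups"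
  using Ups_submod Ups_neq_zero Ups_subset_submod[OF assms] unfolding simple_on_def by blast

text \<open>Division by \<open>\<partial>\<close>, i.e. \<open>\<partial>\<^sup>2h + \<partial>g \<mapsto> g + \<partial>h\<close>, on \<open>\<Upsilon>\<close>.\<close>
definition divide_partial :: "vec \<Rightarrow> vec" where
  "divide_partial v = (snd v, fst v div [:0, 1:])"

lemma pCons_0_div_x[simp]: "pCons 0 p div [:0, 1:] = (p :: complex poly)"
proof -
  have "pCons 0 p = [:0, 1:] * p" by simp
  then show ?thesis by (metis nonzero_mult_div_cancel_left pCons_eq_0_iff zero_neq_one)
qed

lemma divide_partial_Mact:
  assumes "v \<in> Ups"
  shows "divide_partial (Mact t \<mu> 0 X v) = Mact (- t) \<mu> (1/2) X (divide_partial v)"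
proof -
  obtain h g where v: "v = ([:0, 1:] * h, g)"
    using assms by (auto simp: Ups_def)
  have x_mult_shift: "shift c (pCons 0 h) = [:c, 1:] * shift c h" for c
    using shift_mult[of c "[:0, 1:]" h] by simp
  show ?thesis
    by (cases X) (simp_all add: v x_mult_shift divide_partial_def div_smult_left add.commute)
qed

lemma iso_to_Pi_divide_partial: "iso_to_Pi (Mact t \<mu> 0) Ups (Mact (- t) \<mu> (1/2)) divide_partial"
  unfolding iso_to_Pi_def
proof (intro conjI ballI allI impI)
  show "bij_betw divide_partial Ups UNIV"
  proof (rule bij_betwI')
    fix v w assume "v \<in> Ups" "w \<in> Ups"
    then show "divide_partial v = divide_partial w \<longleftrightarrow> v = w"
      by (auto simp: Ups_def divide_partial_def elim!: dvdE)
  next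
    fix w :: vec
    have "([:0, 1:] * snd w, fst w) \<in> Ups"
      by (simp add: Ups_iff)
    moreover have "w = divide_partial ([:0, 1:] * snd w, fst w)"
      by (simp add: divide_partial_def)
    ultimately show "\<exists>v\<in>Ups. w = divide_partial v" by blast
  qed simp
next
  fix v w assume "v \<in> Ups" "w \<in> Ups"
  then show "divide_partial (vadd v w) = vadd (divide_partial v) (divide_partial w)"
    by (auto simp: Ups_def divide_partial_def elim!: dvdE simp flip: distrib_left)
next
  fix c v assume "v \<in> Ups"
  then show "divide_partial (vsmult c v) = vsmult c (divide_partial v)"
    by (cases v) (simp add: divide_partial_def div_smult_left)
next
  fix X v assume "v \<in> Ups"
  then show "divide_partial (Mact t \<mu> 0 X v) = Mact (- t) \<mu> (1/2) X (divide_partial v)"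
    by (rule divide_partial_Mact)
qed (simp_all add: divide_partial_def)

theorem theorem2p5:
  fixes \<mu> \<alpha> t :: complex
  assumes "\<mu> \<noteq> 0" and "t = 1 \<or> t = -1"
  shows "(simple_mod (Mact t \<mu> \<alpha>) \<longleftrightarrow> \<alpha> \<noteq> 0)
    \<and> is_submod (Mact t \<mu> 0) Ups \<and> Ups \<noteq> {vzero} \<and> Ups \<noteq> UNIV
    \<and> (\<forall>W. is_submod (Mact t \<mu> 0) W \<and> W \<noteq> {vzero} \<and> W \<noteq> UNIV \<longrightarrow> W = Ups)
    \<and> (\<exists>v. v \<notin> Ups \<and> (\<forall>w. \<exists>c. vadd w (vsmult (- c) v) \<in> Ups))
    \<and> (\<forall>X w. Mact t \<mu> 0 X w \<in> Ups)
    \<and> (\<exists>\<phi>. iso_to_Pi (Mact 1 \<mu> 0) Ups (Mact (-1) \<mu> (1/2)) \<phi>)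
    \<and> (\<exists>\<phi>. iso_to_Pi (Mact (-1) \<mu> 0) Ups (Mact 1 \<mu> (1/2)) \<phi>)
    \<and> simple_on (Mact 1 \<mu> 0) Ups \<and> simple_on (Mact (-1) \<mu> 0) Ups"
proof (intro conjI allI impI)
  have "t \<noteq> 0"
    using assms(2) by auto
  have "\<not> simple_mod (Mact t \<mu> 0)"
    using Ups_submod Ups_neq_zero Ups_neq_UNIV unfolding simple_mod_def simple_on_def by blast
  then show "simple_mod (Mact t \<mu> \<alpha>) \<longleftrightarrow> \<alpha> \<noteq> 0"
    using simple_mod_Mact[OF \<open>t \<noteq> 0\<close> assms(1)] by blast
  show "W = Ups" if "is_submod (Mact t \<mu> 0) W \<and> W \<noteq> {vzero} \<and> W \<noteq> UNIV" for W
    using submod_eq_Ups[OF \<open>t \<noteq> 0\<close> assms(1)] that by blast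
  have "(1, 0) \<notin> Ups"
    by (simp add: Ups_iff)
  then show "\<exists>v. v \<notin> Ups \<and> (\<forall>w. \<exists>c. vadd w (vsmult (- c) v) \<in> Ups)"
    using Ups_complement by blast
  show "\<exists>\<phi>. iso_to_Pi (Mact 1 \<mu> 0) Ups (Mact (-1) \<mu> (1/2)) \<phi>"
    using iso_to_Pi_divide_partial[of 1 \<mu>] by auto
  show "\<exists>\<phi>. iso_to_Pi (Mact (-1) \<mu> 0) Ups (Mact 1 \<mu> (1/2)) \<phi>"
    using iso_to_Pi_divide_partial[of "-1" \<mu>] by auto
qed (simp_all add: Ups_submod Ups_neq_zero Ups_neq_UNIV Mact0_in_Ups simple_on_Ups assms(1))

end
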